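(* Let $\boldsymbol{\theta}$ be a parameter (scalar or vector) whose treatment effect $\theta=\theta(\boldsymbol{\theta})$ is real-valued, let $\delta\in\mathbb{R}$ be a clinical margin and $c\in(0,1)$. Let $\mathcal{E}=\{\theta>\delta\}$ and $\bar{\mathcal{E}}=\{\theta\le\delta\}$. Let $\pi_{\mathrm{a}}$ (analysis prior) and $\pi_{\mathrm{d}}$ (design prior) be priors on $\boldsymbol{\theta}$, each giving positive probability to both $\mathcal{E}$ and $\bar{\mathcal{E}}$, and let data $\mathcal{D}$ have likelihood $f(\mathcal{D}\mid\boldsymbol{\theta})$. Assume $\pi_{\mathrm{a}}(\boldsymbol{\theta}\mid\mathcal{E})=\pi_{\mathrm{d}}(\boldsymbol{\theta}\mid\mathcal{E})$ and $\pi_{\mathrm{a}}(\boldsymbol{\theta}\mid\bar{\mathcal{E}})=\pi_{\mathrm{d}}(\boldsymbol{\theta}\mid\bar{\mathcal{E}})$. Define the success indicator $\mathcal{S}(\mathcal{D};c)=\mathbb{I}\{\Pr_{\mathrm{a}}(\mathcal{E}\mid\mathcal{D})>c\}$, and the probability of incorrect decision $\mathrm{PID}(c)=\Pr_{\mathrm{d}}(\bar{\mathcal{E}}\mid\mathcal{S}(\mathcal{D};c)=1)$, computed under the joint model $\boldsymbol{\theta}\sim\pi_{\mathrm{d}}$, $\mathcal{D}\mid\boldsymbol{\theta}\sim f$ (assuming $\Pr_{\mathrm{d}}(\mathcal{S}=1)>0$). Let $OE_{\mathrm{d}}=\Pr_{\mathrm{d}}(\mathcal{E})/\Pr_{\mathrm{d}}(\bar{\mathcal{E}})$,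 $OE_{\mathrm{a}}=\Pr_{\mathrm{a}}(\mathcal{E})/\Pr_{\mathrm{a}}(\bar{\mathcal{E}})$ and $R=OE_{\mathrm{d}}/OE_{\mathrm{a}}$. Then $$\mathrm{PID}(c)\le\frac{1}{R\left(\frac{c}{1-c}\right)+1}.$$
   Context: $\Pr_{\mathrm{a}}(\cdot\mid\mathcal{D})$ denotes the posterior under the analysis prior, $\Pr_{\mathrm{a}}$ and $\Pr_{\mathrm{d}}$ prior probabilities under the analysis and design priors; $\pi(\boldsymbol{\theta}\mid\mathcal{E})$ denotes the prior conditioned on the event $\mathcal{E}$. *)

theory Defs
  imports "HOL-Probability.Probability"
begin

text \<open>Data space: measure space mu (type 'd); the likelihood f t D is a density of
  the data D w.r.t. mu, given the parameter t. theta is the treatment-effect map.\<close>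

definition event_E :: "'p measure \<Rightarrow> ('p \<Rightarrow> real) \<Rightarrow> real \<Rightarrow> 'p set" where
  "event_E P theta delta = {t \<in> space P. theta t > delta}"

definition event_Ebar :: "'p measure \<Rightarrow> ('p \<Rightarrow> real) \<Rightarrow> real \<Rightarrow> 'p set" where
  "event_Ebar P theta delta = {t \<in> space P. theta t \<le> delta}"

definition posterior_E :: "'p measure \<Rightarrow> ('p \<Rightarrow> 'd \<Rightarrow> real) \<Rightarrow> ('p \<Rightarrow> real) \<Rightarrow> real \<Rightarrow> 'd \<Rightarrow> real" where
  "posterior_E P f theta delta D =
     (\<integral>t. indicator (event_E P theta delta) t * f t D \<partial>P) / (\<integral>t. f t D \<partial>P)"

definition success_set :: "'p measure \<Rightarrow> 'd measure \<Rightarrow> ('p \<Rightarrow> 'd \<Rightarrow> real) \<Rightarrow> ('p \<Rightarrow> real) \<Rightarrow> real \<Rightarrow> real \<Rightarrow> 'd set" where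
  "success_set Pa mu f theta delta c = {D \<in> space mu. posterior_E Pa f theta delta D > c}"

definition joint :: "'p measure \<Rightarrow> 'd measure \<Rightarrow> ('p \<Rightarrow> 'd \<Rightarrow> real) \<Rightarrow> ('p \<times> 'd) measure" where
  "joint P mu f = density (P \<Otimes>\<^sub>M mu) (\<lambda>x. ennreal (f (fst x) (snd x)))"

definition PID :: "'p measure \<Rightarrow> 'p measure \<Rightarrow> 'd measure \<Rightarrow> ('p \<Rightarrow> 'd \<Rightarrow> real) \<Rightarrow> ('p \<Rightarrow> real) \<Rightarrow> real \<Rightarrow> real \<Rightarrow> real" where
  "PID Pa Pd mu f theta delta c =
     measure (joint Pd mu f) (event_Ebar Pd theta delta \<times> success_set Pa mu f theta delta c)
     / measure (joint Pd mu f) (space Pd \<times> success_set Pa mu f theta delta c)"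

definition odds_E :: "'p measure \<Rightarrow> ('p \<Rightarrow> real) \<Rightarrow> real \<Rightarrow> real" where
  "odds_E P theta delta = measure P (event_E P theta delta) / measure P (event_Ebar P theta delta)"

end

theory Submission
  imports Defs
begin

text \<open>
  Because the two priors agree conditionally on E and on its complement, the analysis posterior
  weights \<open>\<integral>\<^sub>A f(D|t) dPa(t)\<close> of A = E and A = Ebar are the design ones rescaled by
  Pa(E)/Pd(E) and Pa(Ebar)/Pd(Ebar). Success at D, i.e. \<open>Pr\<^sub>a(E|D) > c\<close>, therefore says
  \<open>c Pa(Ebar)/Pd(Ebar) w(Ebar, D) \<le> (1 - c) Pa(E)/Pd(E) w(E, D)\<close> for the design weights w.
  Integrating over the success set S turns this into the same inequality between the joint
  design probabilities of \<open>Ebar \<times> S\<close> and \<open>E \<times> S\<close>, which rearranges to the bound on PID.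
\<close>

lemma nn_integral_indicator_scaled:
  assumes sets_eq: "sets M = sets N" and E: "E \<in> sets N"
    and scaled: "\<And>A. A \<in> sets N \<Longrightarrow> emeasure M (E \<inter> A) = r * emeasure N (E \<inter> A)"
    and g: "g \<in> borel_measurable N"
  shows "(\<integral>\<^sup>+t. indicator E t * g t \<partial>M) = r * (\<integral>\<^sup>+t. indicator E t * g t \<partial>N)"
proof -
  have gM: "g \<in> borel_measurable M"
    using g by (simp add: measurable_cong_sets[OF sets_eq refl])
  have "density M (indicator E) = scale_measure r (density N (indicator E))"
    by (rule measure_eqI) (use sets_eq E scaled in \<open>auto simp: emeasure_restricted\<close>)
  then have "(\<integral>\<^sup>+t. g t \<partial>density M (indicator E)) = r * (\<integral>\<^sup>+t. g t \<partial>density N (indicator E))"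
    using g by (simp add: nn_integral_scale_measure)
  then show ?thesis
    using sets_eq E g gM by (simp add: nn_integral_density)
qed

lemma emeasure_Int_eq_scaled_of_cond_eq:
  assumes "finite_measure M" "finite_measure N" and sets_eq: "sets M = sets N"
    and pos: "measure M E > 0" "measure N E > 0"
    and cond: "\<And>A. A \<in> sets N \<Longrightarrow> measure M (A \<inter> E) / measure M E = measure N (A \<inter> E) / measure N E"
    and A: "A \<in> sets N"
  shows "emeasure M (E \<inter> A) = ennreal (measure M E / measure N E) * emeasure N (E \<inter> A)"
proof -
  interpret M: finite_measure M by fact
  interpret N: finite_measure N by fact
  have "measure M (A \<inter> E) = measure M E / measure N E * measure N (A \<inter> E)"
    using cond[OF A] pos by (simp add: field_simps)
  then show ?thesis
    by (simp add: M.emeasure_eq_measure N.emeasure_eq_measure ennreal_mult''[symmetric] Int_commute)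
qed

lemma nn_integral_indicator_eq_of_cond_eq:
  assumes "finite_measure M" "finite_measure N" "sets M = sets N" "E \<in> sets N"
    and "measure M E > 0" "measure N E > 0"
    and "\<And>A. A \<in> sets N \<Longrightarrow> measure M (A \<inter> E) / measure M E = measure N (A \<inter> E) / measure N E"
    and "g \<in> borel_measurable N"
  shows "(\<integral>\<^sup>+t. indicator E t * g t \<partial>M)
       = ennreal (measure M E / measure N E) * (\<integral>\<^sup>+t. indicator E t * g t \<partial>N)"
  using assms by (intro nn_integral_indicator_scaled emeasure_Int_eq_scaled_of_cond_eq) auto

lemma posterior_gt_imp_weighted_le:
  assumes E: "E \<in> sets M" and g: "g \<in> borel_measurable M"
    and g_nonneg: "\<And>t. t \<in> space M \<Longrightarrow> 0 \<le> g t" and c: "0 < c"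
    and post: "c < (\<integral>t. indicator E t * g t \<partial>M) / (\<integral>t. g t \<partial>M)"
  shows "ennreal c * (\<integral>\<^sup>+t. indicator (space M - E) t * ennreal (g t) \<partial>M)
       \<le> ennreal (1 - c) * (\<integral>\<^sup>+t. indicator E t * ennreal (g t) \<partial>M)"
proof -
  define TE where "TE = (\<integral>\<^sup>+t. indicator E t * ennreal (g t) \<partial>M)"
  define TEc where "TEc = (\<integral>\<^sup>+t. indicator (space M - E) t * ennreal (g t) \<partial>M)"
  have "(\<integral>\<^sup>+t. ennreal (g t) \<partial>M)
      = (\<integral>\<^sup>+t. indicator E t * ennreal (g t) + indicator (space M - E) t * ennreal (g t) \<partial>M)"
    by (intro nn_integral_cong) (auto simp: indicator_def)
  also have "\<dots> = TE + TEc"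
    unfolding TE_def TEc_def using E g by (intro nn_integral_add) auto
  finally have total: "(\<integral>\<^sup>+t. ennreal (g t) \<partial>M) = TE + TEc" .
  have "(\<integral>t. g t \<partial>M) = enn2real (TE + TEc)"
    using g g_nonneg by (subst integral_eq_nn_integral) (auto simp: total)
  moreover have "(\<integral>t. indicator E t * g t \<partial>M) = enn2real TE"
  proof -
    have "(\<integral>t. indicator E t * g t \<partial>M) = enn2real (\<integral>\<^sup>+t. ennreal (indicator E t * g t) \<partial>M)"
      using E g g_nonneg by (intro integral_eq_nn_integral) auto
    also have "(\<integral>\<^sup>+t. ennreal (indicator E t * g t) \<partial>M) = TE"
      unfolding TE_def by (intro nn_integral_cong) (simp add: indicator_def)
    finally show ?thesis .
  qed
  ultimately have post': "c < enn2real TE / enn2real (TE + TEc)"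
    using post by simp
  \<comment> \<open>an infinite total mass would make the posterior the junk value x / 0 = 0\<close>
  then have "TE + TEc \<noteq> \<top>"
    using c by auto
  then have "TE \<noteq> \<top>" "TEc \<noteq> \<top>"
    by auto
  then obtain e b where e: "TE = ennreal e" "0 \<le> e" and b: "TEc = ennreal b" "0 \<le> b"
    by (metis ennreal_cases)
  have "c < e / (e + b)"
    using post' e b by (simp flip: ennreal_plus)
  then have "c * b \<le> (1 - c) * e"
    using e b c by (cases "e + b = 0") (auto simp: field_simps)
  then show ?thesis
    unfolding TE_def[symmetric] TEc_def[symmetric] using e b c
    by (simp add: ennreal_mult''[symmetric] ennreal_leI flip: ennreal_mult)
qed

lemma posterior_gt_imp_weighted_odds_le:
  fixes Pa Pd :: "'a measure" and E :: "'a set" and g :: "'a \<Rightarrow> real"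
  defines "Ec \<equiv> space Pd - E"
  assumes Pa: "prob_space Pa" and Pd: "prob_space Pd" and sets_eq: "sets Pa = sets Pd"
    and E: "E \<in> sets Pd"
    and pos: "measure Pa E > 0" "measure Pa Ec > 0" "measure Pd E > 0" "measure Pd Ec > 0"
    and cond_E: "\<And>A. A \<in> sets Pd \<Longrightarrow>
        measure Pa (A \<inter> E) / measure Pa E = measure Pd (A \<inter> E) / measure Pd E"
    and cond_Ec: "\<And>A. A \<in> sets Pd \<Longrightarrow>
        measure Pa (A \<inter> Ec) / measure Pa Ec = measure Pd (A \<inter> Ec) / measure Pd Ec"
    and g: "g \<in> borel_measurable Pd" and g_nonneg: "\<And>t. t \<in> space Pd \<Longrightarrow> 0 \<le> g t"
    and c: "0 < c"
    and post: "c < (\<integral>t. indicator E t * g t \<partial>Pa) / (\<integral>t. g t \<partial>Pa)"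
  shows "ennreal (c * (measure Pa Ec / measure Pd Ec))
         * (\<integral>\<^sup>+t. indicator Ec t * ennreal (g t) \<partial>Pd)
       \<le> ennreal ((1 - c) * (measure Pa E / measure Pd E))
         * (\<integral>\<^sup>+t. indicator E t * ennreal (g t) \<partial>Pd)"
proof -
  interpret Pa: prob_space Pa by (rule Pa)
  interpret Pd: prob_space Pd by (rule Pd)
  have space_eq: "space Pa = space Pd"
    using sets_eq by (rule sets_eq_imp_space_eq)
  have g_meas: "(\<lambda>t. ennreal (g t)) \<in> borel_measurable Pd"
    using g by measurable
  have Ec: "Ec \<in> sets Pd"
    unfolding Ec_def using E by auto
  have "ennreal c * (\<integral>\<^sup>+t. indicator Ec t * ennreal (g t) \<partial>Pa)
      \<le> ennreal (1 - c) * (\<integral>\<^sup>+t. indicator E t * ennreal (g t) \<partial>Pa)"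
    unfolding Ec_def space_eq[symmetric] using E g g_nonneg c post sets_eq
    by (intro posterior_gt_imp_weighted_le) (auto simp: measurable_cong_sets[OF sets_eq refl] space_eq)
  moreover have "(\<integral>\<^sup>+t. indicator E t * ennreal (g t) \<partial>Pa)
      = ennreal (measure Pa E / measure Pd E) * (\<integral>\<^sup>+t. indicator E t * ennreal (g t) \<partial>Pd)"
    using pos cond_E g_meas sets_eq E
    by (intro nn_integral_indicator_eq_of_cond_eq Pa.finite_measure_axioms Pd.finite_measure_axioms)
  moreover have "(\<integral>\<^sup>+t. indicator Ec t * ennreal (g t) \<partial>Pa)
      = ennreal (measure Pa Ec / measure Pd Ec) * (\<integral>\<^sup>+t. indicator Ec t * ennreal (g t) \<partial>Pd)"
    using pos cond_Ec g_meas sets_eq Ec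
    by (intro nn_integral_indicator_eq_of_cond_eq Pa.finite_measure_axioms Pd.finite_measure_axioms)
  ultimately show ?thesis
    using pos by (simp add: ennreal_mult'' mult.assoc del: times_divide_eq_right)
qed

lemma divide_add_le_one_div_add_one:
  fixes x y k :: real
  assumes "0 \<le> k" "0 \<le> y" "k * y \<le> x"
  shows "y / (x + y) \<le> 1 / (k + 1)"
proof (cases "x + y = 0")
  case False
  with assms mult_nonneg_nonneg[of k y] have "0 < x + y"
    by linarith
  with assms show ?thesis
    by (simp add: field_simps)
qed (use assms in simp)

lemma Times_in_pair_measure_imp_right:
  assumes "A \<times> S \<in> sets (M \<Otimes>\<^sub>M N)" and "t \<in> A"
  shows "S \<in> sets N"
proof -
  have "Pair t -` (A \<times> S) = S"
    using \<open>t \<in> A\<close> by auto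
  then show ?thesis
    using sets_Pair1[OF assms(1), where x = t] by simp
qed

locale likelihood_model = P: prob_space P + mu: sigma_finite_measure mu
  for P :: "'p measure" and mu :: "'d measure" +
  fixes f :: "'p \<Rightarrow> 'd \<Rightarrow> real"
  assumes f_measurable[measurable]: "(\<lambda>x. f (fst x) (snd x)) \<in> borel_measurable (P \<Otimes>\<^sub>M mu)"
    and f_density: "\<And>t. t \<in> space P \<Longrightarrow> (\<integral>\<^sup>+D. ennreal (f t D) \<partial>mu) = 1"
begin

interpretation PM: pair_sigma_finite P mu ..

lemma borel_measurable_likelihood:
  "D \<in> space mu \<Longrightarrow> (\<lambda>t. f t D) \<in> borel_measurable P"
  using measurable_compose[OF measurable_Pair2' f_measurable] by simp

lemma borel_measurable_nn_integral_likelihood: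
  assumes [measurable]: "A \<in> sets P"
  shows "(\<lambda>D. \<integral>\<^sup>+t. indicator A t * ennreal (f t D) \<partial>P) \<in> borel_measurable mu"
proof -
  have "(\<lambda>(D, t). f t D) \<in> borel_measurable (mu \<Otimes>\<^sub>M P)"
    using measurable_pair_swap[OF f_measurable] by (simp add: case_prod_beta')
  then have "(\<lambda>(D, t). indicator A t * ennreal (f t D)) \<in> borel_measurable (mu \<Otimes>\<^sub>M P)"
    by measurable
  then show ?thesis
    by (rule P.borel_measurable_nn_integral)
qed

lemma prob_space_joint: "prob_space (joint P mu f)"
proof
  have "emeasure (joint P mu f) (space (joint P mu f))
      = (\<integral>\<^sup>+x. ennreal (f (fst x) (snd x)) \<partial>(P \<Otimes>\<^sub>M mu))"
    unfolding joint_def by (subst emeasure_density) (auto intro!: nn_integral_cong)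
  also have "\<dots> = (\<integral>\<^sup>+t. \<integral>\<^sup>+D. ennreal (f t D) \<partial>mu \<partial>P)"
    by (subst mu.nn_integral_fst[symmetric]) auto
  also have "\<dots> = (\<integral>\<^sup>+t. 1 \<partial>P)"
    by (intro nn_integral_cong) (simp add: f_density)
  also have "\<dots> = 1"
    by (simp add: P.emeasure_space_1)
  finally show "emeasure (joint P mu f) (space (joint P mu f)) = 1" .
qed

lemma emeasure_joint_Times:
  assumes [measurable]: "A \<in> sets P" "S \<in> sets mu"
  shows "emeasure (joint P mu f) (A \<times> S)
    = (\<integral>\<^sup>+D. indicator S D * (\<integral>\<^sup>+t. indicator A t * ennreal (f t D) \<partial>P) \<partial>mu)"
proof -
  have "emeasure (joint P mu f) (A \<times> S)
      = (\<integral>\<^sup>+x. ennreal (f (fst x) (snd x)) * indicator (A \<times> S) x \<partial>(P \<Otimes>\<^sub>M mu))"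
    unfolding joint_def by (subst emeasure_density) auto
  also have "\<dots> = (\<integral>\<^sup>+D. \<integral>\<^sup>+t. ennreal (f t D) * indicator (A \<times> S) (t, D) \<partial>P \<partial>mu)"
    by (subst PM.nn_integral_snd[symmetric]) auto
  also have "\<dots> = (\<integral>\<^sup>+D. indicator S D * (\<integral>\<^sup>+t. indicator A t * ennreal (f t D) \<partial>P) \<partial>mu)"
    by (intro nn_integral_cong) (auto simp: indicator_def intro!: nn_integral_cong)
  finally show ?thesis .
qed

lemma measure_joint_Times_mono:
  assumes [measurable]: "A \<in> sets P" "A' \<in> sets P" "S \<in> sets mu" and "0 \<le> a" "0 \<le> b"
    and le: "\<And>D. D \<in> S \<Longrightarrow> ennreal a * (\<integral>\<^sup>+t. indicator A t * ennreal (f t D) \<partial>P)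
                            \<le> ennreal b * (\<integral>\<^sup>+t. indicator A' t * ennreal (f t D) \<partial>P)"
  shows "a * measure (joint P mu f) (A \<times> S) \<le> b * measure (joint P mu f) (A' \<times> S)"
proof -
  interpret J: prob_space "joint P mu f"
    by (rule prob_space_joint)
  note borel_measurable_nn_integral_likelihood[measurable]
  have "ennreal a * emeasure (joint P mu f) (A \<times> S)
      = (\<integral>\<^sup>+D. ennreal a * (indicator S D * (\<integral>\<^sup>+t. indicator A t * ennreal (f t D) \<partial>P)) \<partial>mu)"
    by (subst emeasure_joint_Times) (simp_all add: nn_integral_cmult)
  also have "\<dots> \<le> (\<integral>\<^sup>+D. ennreal b * (indicator S D * (\<integral>\<^sup>+t. indicator A' t * ennreal (f t D) \<partial>P)) \<partial>mu)"
    using le by (intro nn_integral_mono) (auto simp: indicator_def)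
  also have "\<dots> = ennreal b * emeasure (joint P mu f) (A' \<times> S)"
    by (subst emeasure_joint_Times) (simp_all add: nn_integral_cmult)
  finally have "ennreal (a * measure (joint P mu f) (A \<times> S))
      \<le> ennreal (b * measure (joint P mu f) (A' \<times> S))"
    using \<open>0 \<le> a\<close> \<open>0 \<le> b\<close> by (simp add: J.emeasure_eq_measure ennreal_mult)
  then show ?thesis
    using \<open>0 \<le> b\<close> by (simp add: ennreal_le_iff)
qed

lemma in_sets_of_measure_joint_Times_pos:
  assumes "measure (joint P mu f) (space P \<times> S) > 0"
  shows "S \<in> sets mu"
proof -
  \<comment> \<open>a non-measurable set would have the junk measure 0\<close>
  have "space P \<times> S \<in> sets (P \<Otimes>\<^sub>M mu)"
    using assms measure_notin_sets[of "space P \<times> S" "joint P mu f"]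
    unfolding joint_def by fastforce
  then show ?thesis
    using P.not_empty by (blast intro: Times_in_pair_measure_imp_right)
qed

lemma measure_joint_Times_compl_ratio_le:
  assumes [measurable]: "E \<in> sets P" "S \<in> sets mu" and "0 \<le> a" "0 < b"
    and le: "\<And>D. D \<in> S \<Longrightarrow>
      ennreal a * (\<integral>\<^sup>+t. indicator (space P - E) t * ennreal (f t D) \<partial>P)
      \<le> ennreal b * (\<integral>\<^sup>+t. indicator E t * ennreal (f t D) \<partial>P)"
  shows "measure (joint P mu f) ((space P - E) \<times> S) / measure (joint P mu f) (space P \<times> S)
    \<le> 1 / (a / b + 1)"
proof -
  interpret J: prob_space "joint P mu f"
    by (rule prob_space_joint)
  have "sets (joint P mu f) = sets (P \<Otimes>\<^sub>M mu)"
    unfolding joint_def by simp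
  then have "measure (joint P mu f) (space P \<times> S)
      = measure (joint P mu f) (E \<times> S) + measure (joint P mu f) ((space P - E) \<times> S)"
    using sets.sets_into_space[OF assms(1)]
    by (subst J.finite_measure_Union[symmetric]) (auto intro!: arg_cong[where f = "measure _"])
  moreover have "a * measure (joint P mu f) ((space P - E) \<times> S) \<le> b * measure (joint P mu f) (E \<times> S)"
    using assms by (intro measure_joint_Times_mono) auto
  then have "a / b * measure (joint P mu f) ((space P - E) \<times> S) \<le> measure (joint P mu f) (E \<times> S)"
    using \<open>0 < b\<close> by (simp add: field_simps)
  ultimately show ?thesis
    using assms by (simp add: divide_add_le_one_div_add_one)
qed

end

theorem theorem1:
  fixes Pa Pd :: "'p measure" and mu :: "'d measure"
    and f :: "'p \<Rightarrow> 'd \<Rightarrow> real" and theta :: "'p \<Rightarrow> real"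
    and delta c :: real
  assumes Pa: "prob_space Pa" and Pd: "prob_space Pd"
    and sets_eq: "sets Pa = sets Pd"
    and mu: "sigma_finite_measure mu"
    and theta_meas: "theta \<in> borel_measurable Pd"
    and f_meas: "(\<lambda>x. f (fst x) (snd x)) \<in> borel_measurable (Pd \<Otimes>\<^sub>M mu)"
    and f_nonneg: "\<And>t D. t \<in> space Pd \<Longrightarrow> D \<in> space mu \<Longrightarrow> f t D \<ge> 0"
    and f_density: "\<And>t. t \<in> space Pd \<Longrightarrow> (\<integral>\<^sup>+ D. ennreal (f t D) \<partial>mu) = 1"
    and c: "0 < c" "c < 1"
    and Pa_E: "measure Pa (event_E Pd theta delta) > 0"
    and Pa_Ebar: "measure Pa (event_Ebar Pd theta delta) > 0"
    and Pd_E: "measure Pd (event_E Pd theta delta) > 0"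
    and Pd_Ebar: "measure Pd (event_Ebar Pd theta delta) > 0"
    and cond_E: "\<And>A. A \<in> sets Pd \<Longrightarrow>
        measure Pa (A \<inter> event_E Pd theta delta) / measure Pa (event_E Pd theta delta)
      = measure Pd (A \<inter> event_E Pd theta delta) / measure Pd (event_E Pd theta delta)"
    and cond_Ebar: "\<And>A. A \<in> sets Pd \<Longrightarrow>
        measure Pa (A \<inter> event_Ebar Pd theta delta) / measure Pa (event_Ebar Pd theta delta)
      = measure Pd (A \<inter> event_Ebar Pd theta delta) / measure Pd (event_Ebar Pd theta delta)"
    and success_pos: "measure (joint Pd mu f) (space Pd \<times> success_set Pa mu f theta delta c) > 0"
  shows "PID Pa Pd mu f theta delta c
         \<le> 1 / ((odds_E Pd theta delta / odds_E Pa theta delta) * (c / (1 - c)) + 1)"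
proof -
  interpret Pd: prob_space Pd by (rule Pd)
  interpret model: likelihood_model Pd mu f
    using Pd mu f_meas f_density by (auto simp: likelihood_model_def likelihood_model_axioms_def)
  define E where "E = event_E Pd theta delta"
  define S where "S = success_set Pa mu f theta delta c"
  note theta_meas[measurable]
  have E_sets[measurable]: "E \<in> sets Pd"
    unfolding E_def event_E_def by measurable
  have Ebar: "event_Ebar Pd theta delta = space Pd - E" "event_Ebar Pa theta delta = space Pd - E"
    and E_Pa: "event_E Pa theta delta = E"
    unfolding E_def event_E_def event_Ebar_def sets_eq_imp_space_eq[OF sets_eq] by auto
  have S_sets: "S \<in> sets mu"
    using success_pos unfolding S_def by (rule model.in_sets_of_measure_joint_Times_pos)
  let ?a = "c * (measure Pa (space Pd - E) / measure Pd (space Pd - E))"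
  let ?b = "(1 - c) * (measure Pa E / measure Pd E)"
  have "PID Pa Pd mu f theta delta c \<le> 1 / (?a / ?b + 1)"
    unfolding PID_def Ebar S_def[symmetric]
  proof (rule model.measure_joint_Times_compl_ratio_le)
    fix D assume "D \<in> S"
    then have "D \<in> space mu" "c < posterior_E Pa f theta delta D"
      unfolding S_def success_set_def by auto
    then show "ennreal ?a * (\<integral>\<^sup>+t. indicator (space Pd - E) t * ennreal (f t D) \<partial>Pd)
      \<le> ennreal ?b * (\<integral>\<^sup>+t. indicator E t * ennreal (f t D) \<partial>Pd)"
      using Pa Pd sets_eq E_sets Pa_E Pa_Ebar Pd_E Pd_Ebar cond_E cond_Ebar f_nonneg c
      unfolding posterior_E_def E_Pa Ebar E_def[symmetric]
      by (intro posterior_gt_imp_weighted_odds_le model.borel_measurable_likelihood) auto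
  qed (use S_sets E_sets c Pa_E Pd_E in \<open>auto simp flip: E_def\<close>)
  also have "?a / ?b = odds_E Pd theta delta / odds_E Pa theta delta * (c / (1 - c))"
    unfolding odds_E_def E_Pa Ebar E_def[symmetric] by (simp add: field_simps)
  finally show ?thesis .
qed

end
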